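(* Let $K\ge 2$ and let $\boldsymbol{x}_1\in\mathbb{R}^{p_1},\dots,\boldsymbol{x}_K\in\mathbb{R}^{p_K}$ be random vectors whose entries lie in $\mathcal{L}_0^2$. Let $r_k=\dim\operatorname{span}(\boldsymbol{x}_k^\top)\ge 1$ and $r_f=\dim\sum_{k=1}^K\operatorname{span}(\boldsymbol{x}_k^\top)$. Let $\boldsymbol{f}_k\in\mathbb{R}^{r_k}$ be a random vector whose entries form an orthonormal basis of $\operatorname{span}(\boldsymbol{x}_k^\top)$ (so $\operatorname{cov}(\boldsymbol{f}_k)=\mathbf{I}_{r_k}$), let $\boldsymbol{f}=(\boldsymbol{f}_1^\top,\dots,\boldsymbol{f}_K^\top)^\top$, and let $\boldsymbol{\eta}^{(1)},\dots,\boldsymbol{\eta}^{(r_f)}$ be orthonormal eigenvectors of $\operatorname{cov}(\boldsymbol{f})$ with $\boldsymbol{\eta}^{(\ell)}$ corresponding to the $\ell$th largest eigenvalue $\lambda_\ell(\operatorname{cov}(\boldsymbol{f}))$; write $\boldsymbol{\eta}^{(\ell)}=((\boldsymbol{\eta}^{(\ell)}_1)^\top,\dots,(\boldsymbol{\eta}^{(\ell)}_K)^\top)^\top$ with $\boldsymbol{\eta}^{(\ell)}_k\in\mathbb{R}^{r_k}$. (Note $r_f=\operatorname{rank}\operatorname{cov}(\boldsymbol{f})$.) Consider, for $\ell=1,\dots,r_f$, the $\ell$th stage of Carroll's GCCA: $$\max_{z_1,\dots,z_K,w}\ \sum_{k=1}^K\cos^2\{\theta(z_k,w)\}\quad\text{s.t.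 } z_k\in\operatorname{span}(\boldsymbol{x}_k^\top),\ \|z_k\|=1\ (k\le K),\quad w\in\mathcal{L}_0^2,\ \|w\|=1,\ w\perp w^{(j)}\ (0\le j\le \ell-1),$$ where $w^{(0)}=0$ and $w^{(1)},\dots,w^{(\ell-1)}$ are the auxiliary variables chosen at the earlier stages. Then: (i) For every $\ell\le r_f$ and $k\le K$, a solution $(z^{(\ell)}_1,\dots,z^{(\ell)}_K,w^{(\ell)})$ of stage $\ell$ (with earlier stages solved in the same way) is given by $$w^{(\ell)}=[\lambda_\ell(\operatorname{cov}(\boldsymbol{f}))]^{-1/2}(\boldsymbol{\eta}^{(\ell)})^\top\boldsymbol{f},\qquad z_k^{(\ell)}=\begin{cases}\text{any standardized variable in }\operatorname{span}(\boldsymbol{x}_k^\top),&\boldsymbol{\eta}_k^{(\ell)}=\boldsymbol{0},\\ \pm(\boldsymbol{\eta}_k^{(\ell)}/\|\boldsymbol{\eta}_k^{(\ell)}\|_F)^\top\boldsymbol{f}_k,&\boldsymbol{\eta}_k^{(\ell)}\neq\boldsymbol{0}.\end{cases}$$ Moreover, $\cos\{\theta(z_k^{(\ell)},w^{(\ell)})\}=\pm[\lambda_\ell(\operatorname{cov}(\boldsymbol{f}))]^{1/2}\|\boldsymbol{\eta}_k^{(\ell)}\|_F$, $\sum_{k=1}^K\cos^2\{\theta(z_k^{(\ell)},w^{(\ell)})\}=\lambda_\ell(\operatorname{cov}(\boldsymbol{f}))$, and $\sum_{k=1}^K\operatorname{span}(\boldsymbol{x}_k^\top)=\operatorname{span}(\{w^{(\ell)}\}_{\ell=1}^{r_f})$.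 (ii) For $\ell\le r_f$, redefine $z_k^{(\ell)}=0$ if $\boldsymbol{\eta}_k^{(\ell)}=\boldsymbol{0}$ (equivalently $w^{(\ell)}\perp\operatorname{span}(\boldsymbol{x}_k^\top)$) and $z_k^{(\ell)}=(\boldsymbol{\eta}_k^{(\ell)}/\|\boldsymbol{\eta}_k^{(\ell)}\|_F)^\top\boldsymbol{f}_k$ otherwise. Then $\theta(z_k^{(\ell)},w^{(\ell)})\in[0,\pi/2]$ and $\operatorname{span}(\{z_k^{(\ell)}\}_{\ell=1}^{r_f})=\operatorname{span}(\boldsymbol{x}_k^\top)$ for every $k\le K$. (iii) For $z_k^{(\ell)}$ defined either as in (i) or as in (ii): if for some $\ell\le r_f$ and some $k\le K$ we have $\lambda_\ell(\operatorname{cov}(\boldsymbol{f}))\le 1$ and $\operatorname{span}(\{z_k^{(m)}\}_{m=1}^{\ell-1})\neq\operatorname{span}(\boldsymbol{x}_k^\top)$, then there exists a solution $w^{(\ell)}$ of the $\ell$th stage with $w^{(\ell)}\in\operatorname{span}(\boldsymbol{x}_k^\top)$ and $w^{(\ell)}\perp\sum_{1\le j\neq k\le K}\operatorname{span}(\boldsymbol{x}_j^\top)$.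
   Context: $\mathcal{L}_0^2$ denotes the vector space of real-valued random variables with zero mean and finite variance, endowed with the covariance $\operatorname{cov}(\cdot,\cdot)$ as inner product; $\|x\|=\sqrt{\operatorname{var}(x)}$, $\perp$ means zero covariance (uncorrelatedness), and $\theta(x,y)$ is the angle in this inner product space, so $\cos\{\theta(x,y)\}=\operatorname{corr}(x,y)$ with the convention $\operatorname{corr}(x,0)=0$. For a random vector $\boldsymbol{v}$ with entries in $\mathcal{L}_0^2$, $\operatorname{span}(\boldsymbol{v}^\top)$ is the subspace of $\mathcal{L}_0^2$ spanned by its entries, and sums of subspaces are the usual sums. A standardized variable is one with unit variance. *)

theory Defs
  imports "HOL-Analysis.Analysis"
begin

text \<open>The space L_0^2 with the covariance inner product is modelled by an abstract
  real inner product space 'v: inner = cov, norm = standard deviation.\<close>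

definition corr :: "'v::real_inner \<Rightarrow> 'v \<Rightarrow> real" where
  "corr x y = inner x y / (norm x * norm y)"

definition theta :: "'v::real_inner \<Rightarrow> 'v \<Rightarrow> real" where
  "theta x y = arccos (corr x y)"

text \<open>Feasible set of a GCCA stage: X k is the set of entries of x_k,
  W the set of previously chosen auxiliary variables (including w^(0) = 0).\<close>
definition gcca_feasible ::
  "nat \<Rightarrow> (nat \<Rightarrow> 'v::real_inner set) \<Rightarrow> 'v set \<Rightarrow> (nat \<Rightarrow> 'v) \<Rightarrow> 'v \<Rightarrow> bool" where
  "gcca_feasible K X W z w \<longleftrightarrow>
     (\<forall>k\<in>{1..K}. z k \<in> span (X k) \<and> norm (z k) = 1) \<and>
     norm w = 1 \<and> (\<forall>u\<in>W. inner w u = 0)"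

definition gcca_obj :: "nat \<Rightarrow> (nat \<Rightarrow> 'v::real_inner) \<Rightarrow> 'v \<Rightarrow> real" where
  "gcca_obj K z w = (\<Sum>k=1..K. (corr (z k) w)\<^sup>2)"

definition gcca_stage_solution ::
  "nat \<Rightarrow> (nat \<Rightarrow> 'v::real_inner set) \<Rightarrow> 'v set \<Rightarrow> (nat \<Rightarrow> 'v) \<Rightarrow> 'v \<Rightarrow> bool" where
  "gcca_stage_solution K X W z w \<longleftrightarrow>
     gcca_feasible K X W z w \<and>
     (\<forall>z' w'. gcca_feasible K X W z' w' \<longrightarrow> gcca_obj K z' w' \<le> gcca_obj K z w)"

text \<open>Blocks: eta l k i is the i-th entry (i < r k) of the k-th block of eta^(l).\<close>
definition blk_zero :: "nat \<Rightarrow> (nat \<Rightarrow> real) \<Rightarrow> bool" where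
  "blk_zero n v \<longleftrightarrow> (\<forall>i<n. v i = 0)"

definition blk_norm :: "nat \<Rightarrow> (nat \<Rightarrow> real) \<Rightarrow> real" where
  "blk_norm n v = sqrt (\<Sum>i<n. (v i)\<^sup>2)"

definition gcca_w ::
  "nat \<Rightarrow> (nat \<Rightarrow> nat) \<Rightarrow> (nat \<Rightarrow> nat \<Rightarrow> 'v::real_inner) \<Rightarrow> (nat \<Rightarrow> real)
   \<Rightarrow> (nat \<Rightarrow> nat \<Rightarrow> nat \<Rightarrow> real) \<Rightarrow> nat \<Rightarrow> 'v" where
  "gcca_w K r f lam eta l =
     (1 / sqrt (lam l)) *\<^sub>R (\<Sum>k=1..K. \<Sum>i<r k. eta l k i *\<^sub>R f k i)"

definition gcca_z_ii ::
  "(nat \<Rightarrow> nat) \<Rightarrow> (nat \<Rightarrow> nat \<Rightarrow> 'v::real_inner)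
   \<Rightarrow> (nat \<Rightarrow> nat \<Rightarrow> nat \<Rightarrow> real) \<Rightarrow> nat \<Rightarrow> nat \<Rightarrow> 'v" where
  "gcca_z_ii r f eta l k =
     (if blk_zero (r k) (eta l k) then 0
      else (\<Sum>i<r k. (eta l k i / blk_norm (r k) (eta l k)) *\<^sub>R f k i))"

definition gcca_z_i_choice ::
  "(nat \<Rightarrow> 'v::real_inner set) \<Rightarrow> (nat \<Rightarrow> nat) \<Rightarrow> (nat \<Rightarrow> nat \<Rightarrow> 'v)
   \<Rightarrow> (nat \<Rightarrow> nat \<Rightarrow> nat \<Rightarrow> real) \<Rightarrow> nat \<Rightarrow> nat \<Rightarrow> 'v \<Rightarrow> bool" where
  "gcca_z_i_choice X r f eta l k z \<longleftrightarrow>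
     (if blk_zero (r k) (eta l k) then z \<in> span (X k) \<and> norm z = 1
      else z = gcca_z_ii r f eta l k \<or> z = - gcca_z_ii r f eta l k)"

end

theory Submission
  imports Defs "Jordan_Normal_Form.Determinant"
begin

text \<open>
  Collect the entries of all f_k into one family F indexed by pairs (k, i) and put
  u_m = (eta^(m))^T f, so that w^(m) = lambda_m^(-1/2) u_m. The eigen-equations give
  cov(u_l, u_m) = lambda_m delta_lm, and since the eigenvectors form an orthogonal matrix,
  F = sum_m eta^(m) u_m. Hence for every v the sum of cov(F_s, v)^2 over all s equals
  sum_m lambda_m cov(w^(m), v)^2, which by Bessel's inequality is at most lambda_l when v is a
  unit vector orthogonal to w^(1), ..., w^(l-1). By Cauchy--Schwarz inside each block this sum
  bounds the GCCA objective of every feasible point of stage l, and the proposed solution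
  attains lambda_l because the projection of w^(l) onto span(x_k) is
  lambda_l^(1/2) |eta_k^(l)| z_k^(l). The same projection formula gives (ii). For (iii), a
  unit vector y in span(x_k) orthogonal to the earlier z_k^(m) is orthogonal to the earlier
  w^(m); the choice z_k = w = y has objective at least 1 >= lambda_l, and the bound forces
  all coordinates of y in the other blocks to vanish.
\<close>

definition orthonormal_on :: "'i set \<Rightarrow> ('i \<Rightarrow> 'v::real_inner) \<Rightarrow> bool" where
  "orthonormal_on I g \<longleftrightarrow> (\<forall>i\<in>I. \<forall>j\<in>I. inner (g i) (g j) = (if i = j then 1 else 0))"

definition orthonormal_proj :: "'i set \<Rightarrow> ('i \<Rightarrow> 'v::real_inner) \<Rightarrow> 'v \<Rightarrow> 'v" where
  "orthonormal_proj I g y = (\<Sum>i\<in>I. inner y (g i) *\<^sub>R g i)"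

context
  fixes I :: "'i set" and g :: "'i \<Rightarrow> 'v::real_inner"
  assumes finite_I: "finite I" and orthonormal: "orthonormal_on I g"
begin

lemma inner_sum_orthonormal:
  assumes "j \<in> I"
  shows "inner (\<Sum>i\<in>I. c i *\<^sub>R g i) (g j) = c j"
proof -
  have "(\<Sum>i\<in>I. c i * inner (g i) (g j)) = (\<Sum>i\<in>I. if i = j then c i else 0)"
    using orthonormal assms by (intro sum.cong) (auto simp: orthonormal_on_def)
  then show ?thesis by (simp add: inner_sum_left finite_I assms)
qed

lemma inner_self_sum_orthonormal:
  "inner (\<Sum>i\<in>I. c i *\<^sub>R g i) (\<Sum>i\<in>I. c i *\<^sub>R g i) = (\<Sum>i\<in>I. (c i)\<^sup>2)"
  by (simp add: inner_sum_right inner_sum_orthonormal power2_eq_square)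

lemma inner_orthonormal_proj: "j \<in> I \<Longrightarrow> inner (orthonormal_proj I g y) (g j) = inner y (g j)"
  unfolding orthonormal_proj_def by (rule inner_sum_orthonormal)

lemma linear_orthonormal_proj: "linear (orthonormal_proj I g)"
  by (rule linearI)
    (simp_all add: orthonormal_proj_def inner_add_left scaleR_add_left sum.distrib scaleR_sum_right)

lemma orthonormal_proj_span: "y \<in> span (g ` I) \<Longrightarrow> orthonormal_proj I g y = y"
proof -
  assume y: "y \<in> span (g ` I)"
  define d where "d = y - orthonormal_proj I g y"
  have "d \<in> span (g ` I)"
    unfolding d_def orthonormal_proj_def by (intro span_diff y span_sum span_scale span_base) auto
  \<comment> \<open>The qualified name: Jordan_Normal_Form shadows orthogonal by a predicate on vector lists.\<close>
  moreover have "Linear_Algebra.orthogonal d a" if "a \<in> g ` I" for a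
    using that by (auto simp: d_def Linear_Algebra.orthogonal_def inner_diff_left inner_orthonormal_proj)
  ultimately have "Linear_Algebra.orthogonal d d" by (rule orthogonal_to_span)
  then show ?thesis by (simp add: d_def Linear_Algebra.orthogonal_def)
qed

lemma inner_span_orthonormal:
  "y \<in> span (g ` I) \<Longrightarrow> inner y v = (\<Sum>i\<in>I. inner y (g i) * inner (g i) v)"
  by (subst orthonormal_proj_span[symmetric]) (auto simp: orthonormal_proj_def inner_sum_left)

lemma inner_orthonormal_proj_right:
  assumes "y \<in> span (g ` I)"
  shows "inner y (orthonormal_proj I g v) = inner y v"
proof -
  have "inner y (orthonormal_proj I g v) = (\<Sum>i\<in>I. inner y (g i) * inner (g i) v)"
    by (simp add: orthonormal_proj_def inner_sum_right inner_commute mult.commute)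
  also have "\<dots> = inner y v"
    by (rule inner_span_orthonormal[OF assms, symmetric])
  finally show ?thesis .
qed

lemma parseval_span_orthonormal:
  assumes "y \<in> span (g ` I)"
  shows "inner y y = (\<Sum>i\<in>I. (inner y (g i))\<^sup>2)"
proof -
  have "inner y y = (\<Sum>i\<in>I. inner y (g i) * inner (g i) y)"
    by (rule inner_span_orthonormal[OF assms])
  also have "\<dots> = (\<Sum>i\<in>I. (inner y (g i))\<^sup>2)"
    by (simp add: power2_eq_square inner_commute)
  finally show ?thesis .
qed

lemma bessel_inequality: "(\<Sum>i\<in>I. (inner (g i) v)\<^sup>2) \<le> inner v v"
proof -
  define q where "q = orthonormal_proj I g v"
  have qq: "inner q q = (\<Sum>i\<in>I. (inner (g i) v)\<^sup>2)"
    unfolding q_def orthonormal_proj_def by (simp add: inner_self_sum_orthonormal inner_commute)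
  have qv: "inner q v = (\<Sum>i\<in>I. (inner (g i) v)\<^sup>2)"
    unfolding q_def orthonormal_proj_def inner_sum_left by (simp add: power2_eq_square inner_commute)
  have "0 \<le> inner (v - q) (v - q)" by simp
  also have "\<dots> = inner v v - 2 * inner q v + inner q q"
    by (simp add: inner_diff_left inner_diff_right inner_commute)
  finally show ?thesis using qq qv by simp
qed

lemma inner_unit_span_square_le:
  assumes "y \<in> span (g ` I)" and "norm y = 1"
  shows "(inner y v)\<^sup>2 \<le> (\<Sum>i\<in>I. (inner (g i) v)\<^sup>2)"
proof -
  have "(inner y v)\<^sup>2 = (\<Sum>i\<in>I. inner y (g i) * inner (g i) v)\<^sup>2"
    using inner_span_orthonormal[OF assms(1), of v] by (rule arg_cong)
  also have "\<dots> \<le> (\<Sum>i\<in>I. (inner y (g i))\<^sup>2) * (\<Sum>i\<in>I. (inner (g i) v)\<^sup>2)"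
    by (rule Cauchy_Schwarz_ineq_sum)
  also have "(\<Sum>i\<in>I. (inner y (g i))\<^sup>2) = 1"
    using parseval_span_orthonormal[OF assms(1)] assms(2) by (simp add: dot_square_norm)
  finally show ?thesis by simp
qed

lemma dim_span_orthonormal: "dim (span (g ` I)) = card I"
proof -
  have inj: "inj_on g I"
    using orthonormal by (auto intro!: inj_onI simp: orthonormal_on_def) (metis zero_neq_one)
  have "independent (g ` I)"
  proof (rule pairwise_orthogonal_independent)
    show "pairwise Linear_Algebra.orthogonal (g ` I)"
      using orthonormal by (auto simp: pairwise_def Linear_Algebra.orthogonal_def orthonormal_on_def)
    show "0 \<notin> g ` I"
      using orthonormal by (force simp: orthonormal_on_def)
  qed
  then show ?thesis
    by (simp add: dim_span dim_eq_card_independent card_image[OF inj])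
qed

end

lemma finite_span_projection_exists:
  fixes Z :: "'v::real_inner set"
  assumes "finite Z"
  shows "\<exists>p\<in>span Z. \<forall>u\<in>Z. inner (y - p) u = 0"
  using assms
proof (induction Z arbitrary: y rule: finite_induct)
  case empty
  then show ?case by (auto intro: span_zero)
next
  case (insert a Z)
  obtain p where p: "p \<in> span Z" "\<forall>u\<in>Z. inner (y - p) u = 0"
    using insert.IH by blast
  obtain q where q: "q \<in> span Z" "\<forall>u\<in>Z. inner (a - q) u = 0"
    using insert.IH by blast
  have perp_span: "inner (v - t) s = 0"
    if "\<forall>u\<in>Z. inner (v - t) u = 0" and "s \<in> span Z" for v t s
    using orthogonal_to_span[OF \<open>s \<in> span Z\<close>, of "v - t"] that
    by (simp add: Linear_Algebra.orthogonal_def)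
  \<comment> \<open>A Gram--Schmidt step; if a - q = 0, division by zero makes c = 0.\<close>
  define c where "c = inner (y - p) (a - q) / inner (a - q) (a - q)"
  define p' where "p' = p + c *\<^sub>R (a - q)"
  have "p' \<in> span (insert a Z)"
    unfolding p'_def using p(1) q(1)
    by (intro span_add span_scale span_diff) (auto intro: span_base span_mono[THEN subsetD])
  moreover have "inner (y - p') u = 0" if "u \<in> Z" for u
    using p(2) q(2) that by (simp add: p'_def inner_diff_left inner_add_left algebra_simps)
  moreover have "inner (y - p') (a - q) = 0"
  proof -
    have "inner (y - p') (a - q) = inner (y - p) (a - q) - c * inner (a - q) (a - q)"
      by (simp add: p'_def inner_diff_left inner_add_left algebra_simps)
    then show ?thesis
      by (cases "a - q = 0") (simp_all add: c_def)
  qed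
  moreover have "inner (y - p') q = 0"
    using calculation(2) q(1) by (rule perp_span[rule_format])
  ultimately show ?case
    by (intro bexI[of _ p']) (auto simp: inner_diff_right)
qed

lemma exists_unit_orthogonal_in_span:
  fixes Z :: "'v::real_inner set"
  assumes "finite Z" and "Z \<subseteq> span Y" and "span Z \<noteq> span Y"
  shows "\<exists>z\<in>span Y. norm z = 1 \<and> (\<forall>u\<in>Z. inner z u = 0)"
proof -
  have "span Z \<subseteq> span Y"
    using assms(2) by (simp add: span_minimal)
  with assms(3) obtain y where y: "y \<in> span Y" "y \<notin> span Z" by blast
  obtain p where p: "p \<in> span Z" "\<forall>u\<in>Z. inner (y - p) u = 0"
    using finite_span_projection_exists[OF assms(1)] by blast
  have "y - p \<noteq> 0" using y(2) p(1) by auto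
  moreover have "y - p \<in> span Y"
    using y(1) p(1) \<open>span Z \<subseteq> span Y\<close> by (auto intro: span_diff)
  ultimately show ?thesis
    using p(2) by (intro bexI[of _ "(1 / norm (y - p)) *\<^sub>R (y - p)"]) (auto intro: span_scale)
qed

lemma span_UN_cong:
  fixes A B :: "'i \<Rightarrow> 'v::real_vector set"
  assumes "\<And>k. k \<in> I \<Longrightarrow> span (A k) = span (B k)"
  shows "span (\<Union>k\<in>I. A k) = span (\<Union>k\<in>I. B k)"
proof -
  have UN_subset: "(\<Union>k\<in>I. A k) \<subseteq> span (\<Union>k\<in>I. B k)"
    if "\<And>k. k \<in> I \<Longrightarrow> span (A k) = span (B k)" for A B :: "'i \<Rightarrow> 'v set"
  proof clarify
    fix k a assume "k \<in> I" "a \<in> A k"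
    then have "a \<in> span (B k)" using that span_superset by blast
    then show "a \<in> span (\<Union>k\<in>I. B k)"
      using \<open>k \<in> I\<close> span_mono[of "B k" "\<Union>k\<in>I. B k"] by blast
  qed
  show ?thesis
    unfolding span_eq using UN_subset[of A B] UN_subset[of B A] assms by auto
qed

lemma orthonormal_rows_imp_orthonormal_columns:
  fixes e :: "nat \<Rightarrow> 's \<Rightarrow> real"
  assumes "finite S" and "card S = n"
    and rows: "\<And>l m. l \<in> {1..n} \<Longrightarrow> m \<in> {1..n} \<Longrightarrow>
                 (\<Sum>s\<in>S. e l s * e m s) = (if l = m then 1 else 0)"
    and "s \<in> S" and "t \<in> S"
  shows "(\<Sum>m=1..n. e m s * e m t) = (if s = t then 1 else 0)"
proof -
  obtain h where h: "bij_betw h {0..<n} S"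
    using ex_bij_betw_nat_finite[OF \<open>finite S\<close>] \<open>card S = n\<close> by auto
  define A where "A = mat n n (\<lambda>(i, j). e (Suc i) (h j))"
  have A: "A \<in> carrier_mat n n" unfolding A_def by simp
  have "A * transpose_mat A = 1\<^sub>m n"
  proof (rule eq_matI)
    fix i j assume "i < dim_row (1\<^sub>m n :: real mat)" "j < dim_col (1\<^sub>m n :: real mat)"
    then have ij: "i < n" "j < n" by auto
    have "(A * transpose_mat A) $$ (i, j) = (\<Sum>k=0..<n. e (Suc i) (h k) * e (Suc j) (h k))"
      using ij unfolding A_def by (simp add: scalar_prod_def)
    also have "\<dots> = (\<Sum>s\<in>S. e (Suc i) s * e (Suc j) s)"
      by (rule sum.reindex_bij_betw[OF h])
    also have "\<dots> = 1\<^sub>m n $$ (i, j)"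
      using ij by (simp add: rows)
    finally show "(A * transpose_mat A) $$ (i, j) = 1\<^sub>m n $$ (i, j)" .
  qed (use A in auto)
  then have cols: "transpose_mat A * A = 1\<^sub>m n"
    by (rule mat_mult_left_right_inverse[OF A transpose_carrier_mat[THEN iffD2, OF A]])
  obtain a b where ab: "a < n" "b < n" "s = h a" "t = h b"
    using h \<open>s \<in> S\<close> \<open>t \<in> S\<close> unfolding bij_betw_def by auto
  have "(\<Sum>m=1..n. e m s * e m t) = (\<Sum>i=0..<n. e (Suc i) (h a) * e (Suc i) (h b))"
    unfolding ab(3,4) by (simp add: sum.atLeast1_atMost_eq atLeast0LessThan)
  also have "\<dots> = (transpose_mat A * A) $$ (a, b)"
    using ab unfolding A_def by (simp add: scalar_prod_def)
  also have "\<dots> = (if s = t then 1 else 0)"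
    using ab h cols by (auto simp: bij_betw_def inj_on_def)
  finally show ?thesis .
qed

lemma initial_segment_eq_atLeastAtMost_card:
  fixes P :: "nat set"
  assumes "finite P" and "0 \<notin> P" and down: "\<And>m l. m \<in> P \<Longrightarrow> 1 \<le> l \<Longrightarrow> l \<le> m \<Longrightarrow> l \<in> P"
  shows "P = {1..card P}"
proof -
  have "P \<subseteq> {1..card P}"
  proof
    fix m assume "m \<in> P"
    then have "{1..m} \<subseteq> P" using down by auto
    then have "card {1..m} \<le> card P" by (rule card_mono[OF assms(1)])
    moreover have "m \<noteq> 0" using \<open>m \<in> P\<close> assms(2) by metis
    ultimately show "m \<in> {1..card P}" by simp
  qed
  then show ?thesis
    using card_subset_eq[of "{1..card P}" P] by simp
qed

lemma abs_corr_le_1: "\<bar>corr x y\<bar> \<le> 1"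
proof (cases "norm x * norm y = 0")
  case False
  then show ?thesis
    using Cauchy_Schwarz_ineq2[of x y] by (simp add: corr_def abs_divide divide_le_eq_1)
qed (auto simp: corr_def)

lemma corr_unit: "norm x = 1 \<Longrightarrow> norm y = 1 \<Longrightarrow> corr x y = inner x y"
  by (simp add: corr_def)

lemma corr_nonneg: "0 \<le> inner x y \<Longrightarrow> 0 \<le> corr x y"
  by (simp add: corr_def)

lemma theta_le_pi_half: "0 \<le> corr x y \<Longrightarrow> theta x y \<in> {0..pi/2}"
  using abs_corr_le_1[of x y] arccos_lbound[of "corr x y"] arccos_le_pi2[of "corr x y"]
  by (simp add: theta_def)

lemma gcca_feasible_span_cong:
  assumes "\<And>k. k \<in> {1..K} \<Longrightarrow> span (X k) = span (Y k)"
  shows "gcca_feasible K X W z w = gcca_feasible K Y W z w"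
  using assms by (simp add: gcca_feasible_def)

lemma gcca_stage_solution_span_cong:
  assumes "\<And>k. k \<in> {1..K} \<Longrightarrow> span (X k) = span (Y k)"
  shows "gcca_stage_solution K X W z w = gcca_stage_solution K Y W z w"
  using gcca_feasible_span_cong[OF assms] by (simp add: gcca_stage_solution_def)

lemma gcca_z_i_choice_span_cong:
  "span (X k) = span (Y k) \<Longrightarrow> gcca_z_i_choice X r f eta l k z = gcca_z_i_choice Y r f eta l k z"
  by (simp add: gcca_z_i_choice_def)

lemma inner_gcca_z_ii_eq_0_if_choice:
  assumes "gcca_z_i_choice X r f eta l k u" and "inner y u = 0"
  shows "inner y (gcca_z_ii r f eta l k) = 0"
  using assms by (cases "blk_zero (r k) (eta l k)") (auto simp: gcca_z_i_choice_def gcca_z_ii_def)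

lemma blk_norm_nonneg: "0 \<le> blk_norm n v"
  by (simp add: blk_norm_def sum_nonneg)

lemma blk_norm_square: "(blk_norm n v)\<^sup>2 = (\<Sum>i<n. (v i)\<^sup>2)"
  by (simp add: blk_norm_def sum_nonneg)

lemma blk_norm_eq_0_iff: "blk_norm n v = 0 \<longleftrightarrow> blk_zero n v"
  by (auto simp: blk_norm_def blk_zero_def sum_nonneg_eq_0_iff)

text \<open>
  In the paper's notation: F s ranges over the entries of f, E m = eta^(m) and
  std_component m = w^(m).
\<close>
locale gram_eigensystem =
  fixes S :: "'s set" and F :: "'s \<Rightarrow> 'v::real_inner" and n :: nat
    and E :: "nat \<Rightarrow> 's \<Rightarrow> real" and lam :: "nat \<Rightarrow> real"
  assumes finite_S: "finite S" and card_S: "card S = n"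
    and eigen: "\<And>m s. m \<in> {1..n} \<Longrightarrow> s \<in> S \<Longrightarrow>
                  (\<Sum>t\<in>S. inner (F s) (F t) * E m t) = lam m * E m s"
    and orthonormal: "\<And>l m. l \<in> {1..n} \<Longrightarrow> m \<in> {1..n} \<Longrightarrow>
                  (\<Sum>s\<in>S. E l s * E m s) = (if l = m then 1 else 0)"
    and lam_antimono: "\<And>l m. 1 \<le> l \<Longrightarrow> l \<le> m \<Longrightarrow> m \<le> n \<Longrightarrow> lam m \<le> lam l"
begin

definition component :: "nat \<Rightarrow> 'v" where
  "component m = (\<Sum>s\<in>S. E m s *\<^sub>R F s)"

definition std_component :: "nat \<Rightarrow> 'v" where
  "std_component m = (1 / sqrt (lam m)) *\<^sub>R component m"

definition gram_rank :: nat where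
  "gram_rank = dim (span (F ` S))"

lemma inner_F_component:
  "m \<in> {1..n} \<Longrightarrow> s \<in> S \<Longrightarrow> inner (F s) (component m) = lam m * E m s"
  unfolding component_def inner_sum_right by (simp add: eigen[symmetric] mult.commute)

lemma inner_component:
  assumes "l \<in> {1..n}" and "m \<in> {1..n}"
  shows "inner (component l) (component m) = (if l = m then lam m else 0)"
proof -
  have "inner (component l) (component m) = (\<Sum>s\<in>S. E l s * (lam m * E m s))"
    unfolding component_def[of l] inner_sum_left
    by (intro sum.cong) (simp_all add: inner_F_component[OF assms(2)])
  also have "\<dots> = lam m * (\<Sum>s\<in>S. E l s * E m s)"
    by (simp add: sum_distrib_left algebra_simps)
  finally show ?thesis using orthonormal[OF assms] by simp
qed

lemma lam_nonneg: "m \<in> {1..n} \<Longrightarrow> 0 \<le> lam m"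
  using inner_component[of m m] by (metis inner_ge_zero)

lemma component_eq_scaled_std: "m \<in> {1..n} \<Longrightarrow> component m = sqrt (lam m) *\<^sub>R std_component m"
proof (cases "lam m = 0")
  case True
  assume "m \<in> {1..n}"
  then have "inner (component m) (component m) = 0" using True inner_component by simp
  then show ?thesis using True by simp
qed (simp add: std_component_def)

lemma F_eq_sum_component: "s \<in> S \<Longrightarrow> F s = (\<Sum>m=1..n. E m s *\<^sub>R component m)"
proof -
  assume s: "s \<in> S"
  have "(\<Sum>m=1..n. E m s *\<^sub>R component m) = (\<Sum>t\<in>S. (\<Sum>m=1..n. E m s * E m t) *\<^sub>R F t)"
    unfolding component_def scaleR_sum_right scaleR_sum_left
    by (subst sum.swap) simp
  also have "\<dots> = (\<Sum>t\<in>S. if s = t then F t else 0)"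
    using orthonormal_rows_imp_orthonormal_columns[OF finite_S card_S orthonormal s]
    by (intro sum.cong) simp_all
  also have "\<dots> = F s" using s finite_S by simp
  finally show ?thesis by simp
qed

lemma orthonormal_std_component_pos: "orthonormal_on {m \<in> {1..n}. 0 < lam m} std_component"
  unfolding orthonormal_on_def std_component_def
  by (auto simp: inner_component real_sqrt_mult[symmetric] simp del: real_sqrt_mult)

lemma span_F_eq_span_std_component_pos:
  "span (F ` S) = span (std_component ` {m \<in> {1..n}. 0 < lam m})" (is "_ = span ?W")
proof (rule span_subspace)
  have "component m \<in> span ?W" if "m \<in> {1..n}" for m
  proof (cases "lam m = 0")
    case True
    then show ?thesis using component_eq_scaled_std[OF that] by (simp add: span_zero)
  next
    case False
    then have "std_component m \<in> ?W" using that lam_nonneg[OF that] by auto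
    then show ?thesis using component_eq_scaled_std[OF that] by (simp add: span_base span_scale)
  qed
  then show "F ` S \<subseteq> span ?W"
    by (auto simp: F_eq_sum_component intro!: span_sum span_scale)
  have "std_component m \<in> span (F ` S)" for m
    unfolding std_component_def component_def by (intro span_scale span_sum span_base) auto
  then show "span ?W \<subseteq> span (F ` S)"
    by (intro span_minimal subspace_span) auto
qed (rule subspace_span)

lemma positive_eigenvalues: "{m \<in> {1..n}. 0 < lam m} = {1..gram_rank}"
proof -
  let ?P = "{m \<in> {1..n}. 0 < lam m}"
  have "gram_rank = card ?P"
    unfolding gram_rank_def span_F_eq_span_std_component_pos
    by (rule dim_span_orthonormal[OF _ orthonormal_std_component_pos]) simp
  moreover have "?P = {1..card ?P}"
  proof (rule initial_segment_eq_atLeastAtMost_card)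
    show "l \<in> ?P" if "m \<in> ?P" "1 \<le> l" "l \<le> m" for m l
      using that lam_antimono[of l m] by auto
  qed auto
  ultimately show ?thesis by simp
qed

lemma lam_pos: "l \<in> {1..gram_rank} \<Longrightarrow> 0 < lam l"
  using positive_eigenvalues by blast

lemma gram_rank_le: "gram_rank \<le> n"
proof (cases "gram_rank = 0")
  case False
  then have "gram_rank \<in> {m \<in> {1..n}. 0 < lam m}" unfolding positive_eigenvalues by simp
  then show ?thesis by simp
qed simp

lemma orthonormal_std_component: "orthonormal_on {1..gram_rank} std_component"
  using orthonormal_std_component_pos unfolding positive_eigenvalues .

lemma span_F_eq_span_std_component: "span (F ` S) = span (std_component ` {1..gram_rank})"
  using span_F_eq_span_std_component_pos unfolding positive_eigenvalues .

lemma inner_F_std_component: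
  assumes "l \<in> {1..gram_rank}" and "s \<in> S"
  shows "inner (F s) (std_component l) = sqrt (lam l) * E l s"
proof -
  have "l \<in> {1..n}" using assms(1) gram_rank_le by auto
  then have "inner (F s) (std_component l) = lam l / sqrt (lam l) * E l s"
    by (simp add: std_component_def inner_F_component assms(2))
  also have "\<dots> = sqrt (lam l) * E l s"
    using lam_pos[OF assms(1)] by (simp add: real_div_sqrt)
  finally show ?thesis .
qed

lemma sum_inner_F_square:
  "(\<Sum>s\<in>S. (inner (F s) v)\<^sup>2) = (\<Sum>m=1..gram_rank. lam m * (inner (std_component m) v)\<^sup>2)"
proof -
  define c where "c m = inner (component m) v" for m
  have expand: "inner (F s) v = (\<Sum>m=1..n. E m s * c m)" if "s \<in> S" for s
    by (subst F_eq_sum_component[OF that]) (simp add: c_def inner_sum_left)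
  have "(\<Sum>s\<in>S. (inner (F s) v)\<^sup>2) = (\<Sum>s\<in>S. inner (F s) v * (\<Sum>m=1..n. E m s * c m))"
    by (intro sum.cong) (simp_all add: expand power2_eq_square)
  also have "\<dots> = (\<Sum>m=1..n. c m * (\<Sum>s\<in>S. E m s * inner (F s) v))"
    by (simp add: sum_distrib_left sum_distrib_right algebra_simps) (rule sum.swap)
  also have "\<dots> = (\<Sum>m=1..n. lam m * (inner (std_component m) v)\<^sup>2)"
  proof (intro sum.cong refl)
    fix m assume m: "m \<in> {1..n}"
    have "(\<Sum>s\<in>S. E m s * inner (F s) v) = c m"
      by (simp add: c_def component_def inner_sum_left)
    then show "c m * (\<Sum>s\<in>S. E m s * inner (F s) v) = lam m * (inner (std_component m) v)\<^sup>2"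
      using lam_nonneg[OF m]
      by (simp add: c_def component_eq_scaled_std[OF m] power2_eq_square)
  qed
  also have "\<dots> = (\<Sum>m=1..gram_rank. lam m * (inner (std_component m) v)\<^sup>2)"
  proof (rule sum.mono_neutral_right)
    show "\<forall>m\<in>{1..n} - {1..gram_rank}. lam m * (inner (std_component m) v)\<^sup>2 = 0"
    proof
      fix m assume m: "m \<in> {1..n} - {1..gram_rank}"
      then have "\<not> 0 < lam m" using positive_eigenvalues by blast
      moreover have "0 \<le> lam m" using m lam_nonneg by blast
      ultimately show "lam m * (inner (std_component m) v)\<^sup>2 = 0" by simp
    qed
  qed (use gram_rank_le in auto)
  finally show ?thesis .
qed

lemma sum_inner_F_square_le:
  assumes l: "l \<in> {1..gram_rank}" and "norm v = 1"
    and perp: "\<And>m. m \<in> {1..<l} \<Longrightarrow> inner v (std_component m) = 0"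
  shows "(\<Sum>s\<in>S. (inner (F s) v)\<^sup>2) \<le> lam l"
proof -
  have "(\<Sum>s\<in>S. (inner (F s) v)\<^sup>2) \<le> (\<Sum>m=1..gram_rank. lam l * (inner (std_component m) v)\<^sup>2)"
    unfolding sum_inner_F_square
  proof (rule sum_mono)
    fix m assume m: "m \<in> {1..gram_rank}"
    show "lam m * (inner (std_component m) v)\<^sup>2 \<le> lam l * (inner (std_component m) v)\<^sup>2"
    proof (cases "m < l")
      case True
      then show ?thesis using perp[of m] m by (simp add: inner_commute)
    next
      case False
      then have "lam m \<le> lam l" using lam_antimono[of l m] l m gram_rank_le by simp
      then show ?thesis by (rule mult_right_mono) simp
    qed
  qed
  also have "\<dots> = lam l * (\<Sum>m=1..gram_rank. (inner (std_component m) v)\<^sup>2)"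
    by (simp add: sum_distrib_left)
  also have "\<dots> \<le> lam l * inner v v"
    using bessel_inequality[OF _ orthonormal_std_component] lam_pos[OF l]
    by (intro mult_left_mono) simp_all
  also have "\<dots> = lam l" using assms(2) by (simp add: dot_square_norm)
  finally show ?thesis .
qed

end

lemma sum_Sigma_blocks:
  fixes K :: nat and r :: "nat \<Rightarrow> nat"
  shows  "(\<Sum>t\<in>Sigma {1..K} (\<lambda>k. {..<r k}). g t) = (\<Sum>k=1..K. \<Sum>i<r k. g (k, i))"
  by (subst sum.Sigma) auto

locale gcca_setting =
  fixes K :: nat and r :: "nat \<Rightarrow> nat" and f :: "nat \<Rightarrow> nat \<Rightarrow> 'v::real_inner"
    and R :: nat and lam :: "nat \<Rightarrow> real" and eta :: "nat \<Rightarrow> nat \<Rightarrow> nat \<Rightarrow> real"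
  assumes r_pos: "\<And>k. k \<in> {1..K} \<Longrightarrow> 1 \<le> r k"
    and f_orthonormal: "\<And>k. k \<in> {1..K} \<Longrightarrow> orthonormal_on {..<r k} (f k)"
    and R_eq: "R = (\<Sum>k=1..K. r k)"
    and eta_eigen: "\<And>l k i. l \<in> {1..R} \<Longrightarrow> k \<in> {1..K} \<Longrightarrow> i < r k \<Longrightarrow>
          (\<Sum>k'=1..K. \<Sum>i'<r k'. inner (f k i) (f k' i') * eta l k' i') = lam l * eta l k i"
    and eta_orthonormal: "\<And>l m. l \<in> {1..R} \<Longrightarrow> m \<in> {1..R} \<Longrightarrow>
          (\<Sum>k=1..K. \<Sum>i<r k. eta l k i * eta m k i) = (if l = m then 1 else 0)"
    and lam_sorted: "\<And>l m. 1 \<le> l \<Longrightarrow> l \<le> m \<Longrightarrow> m \<le> R \<Longrightarrow> lam m \<le> lam l"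

sublocale gcca_setting \<subseteq>
  gram_eigensystem "Sigma {1..K} (\<lambda>k. {..<r k})" "\<lambda>(k, i). f k i" R "\<lambda>m (k, i). eta m k i" lam
proof
  show "card (Sigma {1..K} (\<lambda>k. {..<r k})) = R"
    by (simp add: R_eq card_SigmaI)
next
  fix m s assume "m \<in> {1..R}" and "s \<in> Sigma {1..K} (\<lambda>k. {..<r k})"
  then show "(\<Sum>t\<in>Sigma {1..K} (\<lambda>k. {..<r k}). inner ((\<lambda>(k, i). f k i) s) ((\<lambda>(k, i). f k i) t) *
               (\<lambda>m (k, i). eta m k i) m t) = lam m * (\<lambda>m (k, i). eta m k i) m s"
  proof (cases s)
    case (Pair k i)
    with \<open>s \<in> Sigma {1..K} (\<lambda>k. {..<r k})\<close> have "k \<in> {1..K}" "i < r k" by auto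
    with \<open>m \<in> {1..R}\<close> show ?thesis
      unfolding sum_Sigma_blocks Pair by (simp only: prod.case eta_eigen)
  qed
next
  fix l m assume "l \<in> {1..R}" and "m \<in> {1..R}"
  then show "(\<Sum>s\<in>Sigma {1..K} (\<lambda>k. {..<r k}). (\<lambda>m (k, i). eta m k i) l s * (\<lambda>m (k, i). eta m k i) m s) =
               (if l = m then 1 else 0)"
    unfolding sum_Sigma_blocks prod.case by (rule eta_orthonormal)
qed (simp_all add: lam_sorted)

context gcca_setting
begin

abbreviation blocks :: "nat \<Rightarrow> 'v set" where
  "blocks \<equiv> \<lambda>k. f k ` {..<r k}"

abbreviation w :: "nat \<Rightarrow> 'v" where
  "w \<equiv> gcca_w K r f lam eta"

abbreviation z :: "nat \<Rightarrow> nat \<Rightarrow> 'v" where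
  "z \<equiv> gcca_z_ii r f eta"

lemma image_blocks: "(\<lambda>(k, i). f k i) ` Sigma {1..K} (\<lambda>k. {..<r k}) = (\<Union>k\<in>{1..K}. f k ` {..<r k})"
  by auto

lemma w_eq_std_component: "w l = std_component l"
  unfolding gcca_w_def std_component_def component_def sum_Sigma_blocks by simp

lemma span_blocks_eq_span_w: "span (\<Union>k\<in>{1..K}. f k ` {..<r k}) = span (w ` {1..gram_rank})"
  unfolding image_blocks[symmetric] w_eq_std_component by (rule span_F_eq_span_std_component)

lemma gram_rank_eq_dim_blocks: "gram_rank = dim (span (\<Union>k\<in>{1..K}. f k ` {..<r k}))"
  unfolding gram_rank_def image_blocks ..

lemma orthonormal_w: "orthonormal_on {1..gram_rank} w"
  unfolding w_eq_std_component by (rule orthonormal_std_component)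

lemma norm_w: "l \<in> {1..gram_rank} \<Longrightarrow> norm (w l) = 1"
  using orthonormal_w by (simp add: orthonormal_on_def norm_eq_sqrt_inner)

lemma inner_f_w:
  "k \<in> {1..K} \<Longrightarrow> i < r k \<Longrightarrow> l \<in> {1..gram_rank} \<Longrightarrow> inner (f k i) (w l) = sqrt (lam l) * eta l k i"
  using inner_F_std_component[of l "(k, i)"] by (simp add: w_eq_std_component)

lemma sum_blk_norm_square:
  assumes "l \<in> {1..gram_rank}"
  shows "(\<Sum>k=1..K. (blk_norm (r k) (eta l k))\<^sup>2) = 1"
proof -
  have "l \<in> {1..R}" using assms gram_rank_le by auto
  then show ?thesis
    unfolding blk_norm_square using eta_orthonormal[of l l] by (simp add: power2_eq_square)
qed

lemma z_in_span: "z l k \<in> span (f k ` {..<r k})"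
proof -
  have "(\<Sum>i<r k. c i *\<^sub>R f k i) \<in> span (f k ` {..<r k})" for c
    by (intro span_sum span_scale span_base) auto
  then show ?thesis unfolding gcca_z_ii_def by (simp add: span_zero)
qed

lemma norm_z:
  assumes "k \<in> {1..K}" and "\<not> blk_zero (r k) (eta l k)"
  shows "norm (z l k) = 1"
proof -
  define N where "N = blk_norm (r k) (eta l k)"
  have "N \<noteq> 0" using assms(2) by (simp add: N_def blk_norm_eq_0_iff)
  have "inner (z l k) (z l k) = (\<Sum>i<r k. (eta l k i / N)\<^sup>2)"
    unfolding gcca_z_ii_def N_def[symmetric] using assms(2)
    by (simp add: inner_self_sum_orthonormal[OF _ f_orthonormal[OF assms(1)]])
  also have "\<dots> = 1"
    using \<open>N \<noteq> 0\<close> by (simp add: power_divide sum_divide_distrib[symmetric] N_def blk_norm_square[symmetric])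
  finally show ?thesis by (simp add: norm_eq_sqrt_inner)
qed

lemma proj_block_w:
  assumes "k \<in> {1..K}" and "m \<in> {1..gram_rank}"
  shows "orthonormal_proj {..<r k} (f k) (w m) = (sqrt (lam m) * blk_norm (r k) (eta m k)) *\<^sub>R z m k"
proof -
  have "orthonormal_proj {..<r k} (f k) (w m) = (\<Sum>i<r k. (sqrt (lam m) * eta m k i) *\<^sub>R f k i)"
    unfolding orthonormal_proj_def using assms
    by (intro sum.cong) (simp_all add: inner_commute inner_f_w)
  also have "\<dots> = (sqrt (lam m) * blk_norm (r k) (eta m k)) *\<^sub>R z m k"
  proof (cases "blk_zero (r k) (eta m k)")
    case True
    then show ?thesis by (simp add: gcca_z_ii_def blk_zero_def)
  next
    case False
    then have "blk_norm (r k) (eta m k) \<noteq> 0" by (simp add: blk_norm_eq_0_iff)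
    then show ?thesis using False by (simp add: gcca_z_ii_def scaleR_sum_right)
  qed
  finally show ?thesis .
qed

lemma inner_block_w:
  assumes "k \<in> {1..K}" and "m \<in> {1..gram_rank}" and "y \<in> span (f k ` {..<r k})"
  shows "inner y (w m) = sqrt (lam m) * blk_norm (r k) (eta m k) * inner y (z m k)"
  using inner_orthonormal_proj_right[OF _ f_orthonormal[OF assms(1)] assms(3), of "w m"]
  by (simp add: proj_block_w[OF assms(1,2)])

lemma inner_z_w:
  assumes "k \<in> {1..K}" and "l \<in> {1..gram_rank}"
  shows "inner (z l k) (w l) = sqrt (lam l) * blk_norm (r k) (eta l k)"
proof (cases "blk_zero (r k) (eta l k)")
  case False
  then show ?thesis
    using inner_block_w[OF assms z_in_span] norm_z[OF assms(1) False] by (simp add: dot_square_norm)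
qed (simp add: blk_norm_eq_0_iff gcca_z_ii_def)

lemma gcca_obj_le_lam:
  assumes l: "l \<in> {1..gram_rank}"
    and feasible: "gcca_feasible K blocks (insert 0 (w ` {1..<l})) zs v"
  shows "gcca_obj K zs v \<le> lam l"
proof -
  have v: "norm v = 1" "\<And>m. m \<in> {1..<l} \<Longrightarrow> inner v (w m) = 0"
    and zs: "\<And>k. k \<in> {1..K} \<Longrightarrow> zs k \<in> span (f k ` {..<r k}) \<and> norm (zs k) = 1"
    using feasible by (auto simp: gcca_feasible_def)
  have "gcca_obj K zs v \<le> (\<Sum>k=1..K. \<Sum>i<r k. (inner (f k i) v)\<^sup>2)"
    unfolding gcca_obj_def
  proof (rule sum_mono)
    fix k assume k: "k \<in> {1..K}"
    then show "(corr (zs k) v)\<^sup>2 \<le> (\<Sum>i<r k. (inner (f k i) v)\<^sup>2)"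
      using zs[OF k] v(1)
      by (simp add: corr_unit inner_unit_span_square_le[OF _ f_orthonormal[OF k]])
  qed
  also have "\<dots> \<le> lam l"
    using sum_inner_F_square_le[OF l v(1)] v(2)
    unfolding sum_Sigma_blocks w_eq_std_component by simp
  finally show ?thesis .
qed

lemma corr_z_i_choice:
  assumes k: "k \<in> {1..K}" and l: "l \<in> {1..gram_rank}"
    and choice: "gcca_z_i_choice blocks r f eta l k y"
  shows "y \<in> span (f k ` {..<r k})" and "norm y = 1"
    and "corr y (w l) = sqrt (lam l) * blk_norm (r k) (eta l k) \<or>
         corr y (w l) = - (sqrt (lam l) * blk_norm (r k) (eta l k))"
proof -
  have "y \<in> span (f k ` {..<r k}) \<and> norm y = 1 \<and>
        (inner y (w l) = sqrt (lam l) * blk_norm (r k) (eta l k) \<or>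
         inner y (w l) = - (sqrt (lam l) * blk_norm (r k) (eta l k)))"
  proof (cases "blk_zero (r k) (eta l k)")
    case True
    then show ?thesis
      using choice inner_block_w[OF k l] by (simp add: gcca_z_i_choice_def blk_norm_eq_0_iff)
  next
    case False
    then have "y = z l k \<or> y = - z l k"
      using choice by (simp add: gcca_z_i_choice_def)
    then show ?thesis
      using z_in_span[of l k] norm_z[OF k False] inner_z_w[OF k l] by (auto simp: span_neg)
  qed
  then show "y \<in> span (f k ` {..<r k})" and "norm y = 1"
    and "corr y (w l) = sqrt (lam l) * blk_norm (r k) (eta l k) \<or>
         corr y (w l) = - (sqrt (lam l) * blk_norm (r k) (eta l k))"
    using norm_w[OF l] by (simp_all add: corr_unit)
qed

lemma gcca_obj_z_i_choice:
  assumes l: "l \<in> {1..gram_rank}"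
    and choice: "\<And>k. k \<in> {1..K} \<Longrightarrow> gcca_z_i_choice blocks r f eta l k (zs k)"
  shows "gcca_obj K zs (w l) = lam l"
proof -
  have "gcca_obj K zs (w l) = (\<Sum>k=1..K. lam l * (blk_norm (r k) (eta l k))\<^sup>2)"
    unfolding gcca_obj_def
  proof (rule sum.cong)
    fix k assume k: "k \<in> {1..K}"
    show "(corr (zs k) (w l))\<^sup>2 = lam l * (blk_norm (r k) (eta l k))\<^sup>2"
      using corr_z_i_choice(3)[OF k l choice[OF k]] lam_pos[OF l]
      by (auto simp: power_mult_distrib)
  qed simp
  also have "\<dots> = lam l"
    using sum_blk_norm_square[OF l] by (simp add: sum_distrib_left[symmetric])
  finally show ?thesis .
qed

lemma stage_solution_z_i_choice:
  assumes l: "l \<in> {1..gram_rank}"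
    and choice: "\<And>k. k \<in> {1..K} \<Longrightarrow> gcca_z_i_choice blocks r f eta l k (zs k)"
  shows "gcca_stage_solution K blocks (insert 0 (w ` {1..<l})) zs (w l)"
proof -
  have "inner (w l) (w m) = 0" if "m \<in> {1..<l}" for m
    using orthonormal_w l that by (auto simp: orthonormal_on_def)
  then have "gcca_feasible K blocks (insert 0 (w ` {1..<l})) zs (w l)"
    using corr_z_i_choice(1,2)[OF _ l choice] norm_w[OF l] by (auto simp: gcca_feasible_def)
  then show ?thesis
    using gcca_obj_le_lam[OF l] gcca_obj_z_i_choice[OF l choice]
    by (simp add: gcca_stage_solution_def)
qed

lemma blk_zero_iff_orthogonal_block:
  assumes k: "k \<in> {1..K}" and l: "l \<in> {1..gram_rank}"
  shows "blk_zero (r k) (eta l k) \<longleftrightarrow> (\<forall>v\<in>span (f k ` {..<r k}). inner (w l) v = 0)"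
proof
  assume "blk_zero (r k) (eta l k)"
  then show "\<forall>v\<in>span (f k ` {..<r k}). inner (w l) v = 0"
    using inner_block_w[OF k l] by (simp add: inner_commute blk_norm_eq_0_iff[symmetric])
next
  assume perp: "\<forall>v\<in>span (f k ` {..<r k}). inner (w l) v = 0"
  have "sqrt (lam l) * eta l k i = 0" if "i < r k" for i
  proof -
    have "f k i \<in> span (f k ` {..<r k})" using that by (intro span_base) auto
    then show ?thesis using perp inner_f_w[OF k that l] by (simp add: inner_commute)
  qed
  then show "blk_zero (r k) (eta l k)"
    using lam_pos[OF l] by (simp add: blk_zero_def)
qed

lemma theta_z_w:
  assumes "k \<in> {1..K}" and "l \<in> {1..gram_rank}"
  shows "theta (z l k) (w l) \<in> {0..pi/2}"
proof (intro theta_le_pi_half corr_nonneg)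
  show "0 \<le> inner (z l k) (w l)"
    using lam_pos[OF assms(2)] blk_norm_nonneg by (simp add: inner_z_w[OF assms])
qed

lemma span_z_eq_span_block:
  assumes k: "k \<in> {1..K}"
  shows "span ((\<lambda>l. z l k) ` {1..gram_rank}) = span (f k ` {..<r k})"
proof
  show "span ((\<lambda>l. z l k) ` {1..gram_rank}) \<subseteq> span (f k ` {..<r k})"
    using z_in_span by (intro span_minimal subspace_span) auto
  let ?P = "orthonormal_proj {..<r k} (f k)"
  let ?Z = "span ((\<lambda>l. z l k) ` {1..gram_rank})"
  have P_w: "?P (w m) \<in> ?Z" if "m \<in> {1..gram_rank}" for m
    unfolding proj_block_w[OF k that] using that by (intro span_scale span_base) auto
  have "f k i \<in> ?Z" if i: "i < r k" for i
  proof -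
    have "f k i \<in> span (\<Union>k\<in>{1..K}. f k ` {..<r k})" using k i by (intro span_base) blast
    then have "f k i \<in> span (w ` {1..gram_rank})" by (simp only: span_blocks_eq_span_w)
    then have "?P (f k i) \<in> span (?P ` w ` {1..gram_rank})"
      using span_linear_image[OF linear_orthonormal_proj[OF _ f_orthonormal[OF k]]] by blast
    also have "\<dots> \<subseteq> ?Z"
      using P_w by (intro span_minimal subspace_span) blast
    finally have "?P (f k i) \<in> ?Z" .
    moreover have "f k i \<in> span (f k ` {..<r k})" using i by (intro span_base) blast
    ultimately show ?thesis
      using orthonormal_proj_span[OF _ f_orthonormal[OF k]] by simp
  qed
  then show "span (f k ` {..<r k}) \<subseteq> span ((\<lambda>l. z l k) ` {1..gram_rank})"
    by (intro span_minimal subspace_span) auto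
qed

lemma orthogonal_to_other_blocks:
  assumes l: "l \<in> {1..gram_rank}" and "lam l \<le> 1" and k: "k \<in> {1..K}"
    and y: "y \<in> span (f k ` {..<r k})" "norm y = 1"
    and perp: "\<And>m. m \<in> {1..<l} \<Longrightarrow> inner y (w m) = 0"
  shows "\<forall>v\<in>span (\<Union>j\<in>{1..K} - {k}. f j ` {..<r j}). inner y v = 0"
proof -
  define c where "c j = (\<Sum>i<r j. (inner (f j i) y)\<^sup>2)" for j
  have c_nonneg: "0 \<le> c j" for j by (simp add: c_def sum_nonneg)
  have "(\<Sum>s\<in>Sigma {1..K} (\<lambda>k. {..<r k}). (inner ((\<lambda>(k, i). f k i) s) y)\<^sup>2) \<le> lam l"
    using sum_inner_F_square_le[OF l y(2)] perp unfolding w_eq_std_component by blast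
  then have "(\<Sum>j=1..K. c j) \<le> 1"
    using \<open>lam l \<le> 1\<close> unfolding sum_Sigma_blocks c_def by simp
  moreover have "c k = 1"
    using parseval_span_orthonormal[OF _ f_orthonormal[OF k] y(1)] y(2)
    by (simp add: c_def inner_commute dot_square_norm)
  moreover have "(\<Sum>j=1..K. c j) = c k + (\<Sum>j\<in>{1..K} - {k}. c j)"
    using k by (simp add: sum.remove)
  ultimately have "(\<Sum>j\<in>{1..K} - {k}. c j) = 0"
    using sum_nonneg[of "{1..K} - {k}" c] c_nonneg by simp
  then have "c j = 0" if "j \<in> {1..K} - {k}" for j
    using sum_nonneg_eq_0_iff[of "{1..K} - {k}" c] c_nonneg that by simp
  then have f_perp: "inner y (f j i) = 0" if "j \<in> {1..K} - {k}" "i < r j" for j i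
    using sum_nonneg_eq_0_iff[of "{..<r j}" "\<lambda>i. (inner (f j i) y)\<^sup>2"] that
    by (simp add: c_def inner_commute)
  have gen_perp: "Linear_Algebra.orthogonal y a"
    if "a \<in> (\<Union>j\<in>{1..K} - {k}. f j ` {..<r j})" for a
  proof -
    from that obtain j i where "j \<in> {1..K} - {k}" "i < r j" "a = f j i" by blast
    then show ?thesis using f_perp by (simp add: Linear_Algebra.orthogonal_def)
  qed
  show ?thesis
  proof
    fix v assume "v \<in> span (\<Union>j\<in>{1..K} - {k}. f j ` {..<r j})"
    then have "Linear_Algebra.orthogonal y v" using gen_perp by (rule orthogonal_to_span)
    then show "inner y v = 0" by (simp add: Linear_Algebra.orthogonal_def)
  qed
qed

lemma stage_solution_in_block:
  assumes l: "l \<in> {1..gram_rank}" and "lam l \<le> 1" and k: "k \<in> {1..K}"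
    and y: "y \<in> span (f k ` {..<r k})" "norm y = 1"
    and perp: "\<And>m. m \<in> {1..<l} \<Longrightarrow> inner y (w m) = 0"
  shows "gcca_stage_solution K blocks (insert 0 (w ` {1..<l})) (\<lambda>j. if j = k then y else f j 0) y"
proof -
  let ?zs = "\<lambda>j. if j = k then y else f j 0"
  have "?zs j \<in> span (f j ` {..<r j}) \<and> norm (?zs j) = 1" if j: "j \<in> {1..K}" for j
  proof -
    have "0 < r j" using r_pos[OF j] by simp
    then show ?thesis
      using y f_orthonormal[OF j] by (auto simp: orthonormal_on_def norm_eq_sqrt_inner intro: span_base)
  qed
  then have feasible: "gcca_feasible K blocks (insert 0 (w ` {1..<l})) ?zs y"
    using y(2) perp by (auto simp: gcca_feasible_def)
  have "1 = (corr (?zs k) y)\<^sup>2"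
    using y(2) by (simp add: corr_unit dot_square_norm)
  also have "\<dots> \<le> gcca_obj K ?zs y"
    unfolding gcca_obj_def using k by (intro member_le_sum) auto
  finally have obj: "1 \<le> gcca_obj K ?zs y" .
  show ?thesis
    unfolding gcca_stage_solution_def
  proof (intro conjI allI impI feasible)
    fix zs' v assume "gcca_feasible K blocks (insert 0 (w ` {1..<l})) zs' v"
    then have "gcca_obj K zs' v \<le> lam l" by (rule gcca_obj_le_lam[OF l])
    then show "gcca_obj K zs' v \<le> gcca_obj K ?zs y" using \<open>lam l \<le> 1\<close> obj by linarith
  qed
qed

lemma stage_solution_orthogonal_to_other_blocks:
  assumes l: "l \<in> {1..gram_rank}" and "lam l \<le> 1" and k: "k \<in> {1..K}"
    and zz: "\<And>m. m \<in> {1..<l} \<Longrightarrow> gcca_z_i_choice blocks r f eta m k (zz m) \<or> zz m = z m k"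
    and incomplete: "span (zz ` {1..<l}) \<noteq> span (f k ` {..<r k})"
  shows "\<exists>zs v. gcca_stage_solution K blocks (insert 0 (w ` {1..<l})) zs v \<and>
           v \<in> span (f k ` {..<r k}) \<and>
           (\<forall>u\<in>span (\<Union>j\<in>{1..K} - {k}. f j ` {..<r j}). inner v u = 0)"
proof -
  have "zz m \<in> span (f k ` {..<r k})" if "m \<in> {1..<l}" for m
  proof -
    have m: "m \<in> {1..gram_rank}" using that l by auto
    from zz[OF that] show ?thesis
    proof
      assume "gcca_z_i_choice blocks r f eta m k (zz m)"
      then show ?thesis by (rule corr_z_i_choice(1)[OF k m])
    qed (simp add: z_in_span)
  qed
  then have "zz ` {1..<l} \<subseteq> span (f k ` {..<r k})" by blast
  then obtain y where y: "y \<in> span (f k ` {..<r k})" "norm y = 1"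
    and y_perp: "\<forall>u\<in>zz ` {1..<l}. inner y u = 0"
    using exists_unit_orthogonal_in_span[OF _ _ incomplete] by blast
  \<comment> \<open>y meets z m k, the normalised block-k part of w m, orthogonally, hence also w m.\<close>
  have perp: "inner y (w m) = 0" if m: "m \<in> {1..<l}" for m
  proof -
    have "inner y (zz m) = 0" using y_perp m by blast
    with zz[OF m] have "inner y (z m k) = 0"
      using inner_gcca_z_ii_eq_0_if_choice by auto
    moreover have "m \<in> {1..gram_rank}" using m l by auto
    ultimately show ?thesis using inner_block_w[OF k _ y(1)] by simp
  qed
  show ?thesis
    using stage_solution_in_block[OF l \<open>lam l \<le> 1\<close> k y perp]
      orthogonal_to_other_blocks[OF l \<open>lam l \<le> 1\<close> k y perp] y(1) by blast
qed

end

theorem theorem1: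
  fixes K :: nat and p r :: "nat \<Rightarrow> nat" and rf R :: nat
    and x f :: "nat \<Rightarrow> nat \<Rightarrow> 'v::real_inner"
    and lam :: "nat \<Rightarrow> real" and eta :: "nat \<Rightarrow> nat \<Rightarrow> nat \<Rightarrow> real"
  assumes K2: "K \<ge> 2"
    and r_def: "\<forall>k\<in>{1..K}. r k = dim (span (x k ` {..<p k})) \<and> r k \<ge> 1"
    and rf_def: "rf = dim (span (\<Union>k\<in>{1..K}. x k ` {..<p k}))"
    and f_orthonormal: "\<forall>k\<in>{1..K}. \<forall>i<r k. \<forall>j<r k.
          inner (f k i) (f k j) = (if i = j then 1 else 0)"
    and f_span: "\<forall>k\<in>{1..K}. span (f k ` {..<r k}) = span (x k ` {..<p k})"
    and R_def: "R = (\<Sum>k=1..K. r k)"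
    and eta_eigen: "\<forall>l\<in>{1..R}. \<forall>k\<in>{1..K}. \<forall>i<r k.
          (\<Sum>k'=1..K. \<Sum>i'<r k'. inner (f k i) (f k' i') * eta l k' i') = lam l * eta l k i"
    and eta_orthonormal: "\<forall>l\<in>{1..R}. \<forall>m\<in>{1..R}.
          (\<Sum>k=1..K. \<Sum>i<r k. eta l k i * eta m k i) = (if l = m then 1 else 0)"
    and lam_sorted: "\<forall>l m. 1 \<le> l \<and> l \<le> m \<and> m \<le> R \<longrightarrow> lam m \<le> lam l"
  shows
    \<comment> \<open>(i)\<close>
    "(\<forall>l\<in>{1..rf}. \<forall>z. (\<forall>k\<in>{1..K}. gcca_z_i_choice (\<lambda>k. x k ` {..<p k}) r f eta l k (z k)) \<longrightarrow>
        gcca_stage_solution K (\<lambda>k. x k ` {..<p k})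
           (insert 0 (gcca_w K r f lam eta ` {1..<l})) z (gcca_w K r f lam eta l) \<and>
        (\<forall>k\<in>{1..K}. corr (z k) (gcca_w K r f lam eta l) = sqrt (lam l) * blk_norm (r k) (eta l k)
                   \<or> corr (z k) (gcca_w K r f lam eta l) = - (sqrt (lam l) * blk_norm (r k) (eta l k))) \<and>
        (\<Sum>k=1..K. (corr (z k) (gcca_w K r f lam eta l))\<^sup>2) = lam l)
     \<and> span (\<Union>k\<in>{1..K}. x k ` {..<p k}) = span (gcca_w K r f lam eta ` {1..rf})
     \<comment> \<open>(ii)\<close>
     \<and> (\<forall>l\<in>{1..rf}. \<forall>k\<in>{1..K}.
          (blk_zero (r k) (eta l k) \<longleftrightarrow>
             (\<forall>v\<in>span (x k ` {..<p k}). inner (gcca_w K r f lam eta l) v = 0)) \<and>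
          theta (gcca_z_ii r f eta l k) (gcca_w K r f lam eta l) \<in> {0..pi/2})
     \<and> (\<forall>k\<in>{1..K}. span ((\<lambda>l. gcca_z_ii r f eta l k) ` {1..rf}) = span (x k ` {..<p k}))
     \<comment> \<open>(iii)\<close>
     \<and> (\<forall>zz :: nat \<Rightarrow> nat \<Rightarrow> 'v.
          ((\<forall>m\<in>{1..rf}. \<forall>k\<in>{1..K}. gcca_z_i_choice (\<lambda>k. x k ` {..<p k}) r f eta m k (zz m k)) \<or>
           (\<forall>m\<in>{1..rf}. \<forall>k\<in>{1..K}. zz m k = gcca_z_ii r f eta m k)) \<longrightarrow>
          (\<forall>l\<in>{1..rf}. \<forall>k\<in>{1..K}.
             lam l \<le> 1 \<and> span ((\<lambda>m. zz m k) ` {1..<l}) \<noteq> span (x k ` {..<p k}) \<longrightarrow>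
             (\<exists>z w. gcca_stage_solution K (\<lambda>k. x k ` {..<p k})
                        (insert 0 (gcca_w K r f lam eta ` {1..<l})) z w \<and>
                     w \<in> span (x k ` {..<p k}) \<and>
                     (\<forall>v\<in>span (\<Union>j\<in>{1..K} - {k}. x j ` {..<p j}). inner w v = 0))))"
proof -
  have r_pos: "\<forall>k\<in>{1..K}. 1 \<le> r k" using r_def by blast
  interpret gcca_setting K r f R lam eta
    using r_pos f_orthonormal R_def eta_eigen eta_orthonormal lam_sorted
    by unfold_locales (auto simp: orthonormal_on_def)
  have span_x: "span (x k ` {..<p k}) = span (f k ` {..<r k})" if "k \<in> {1..K}" for k
    using f_span that by simp
  have span_X: "span (\<Union>k\<in>{1..K}. x k ` {..<p k}) = span (\<Union>k\<in>{1..K}. f k ` {..<r k})"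
    by (rule span_UN_cong) (rule span_x)
  have rf: "rf = gram_rank"
    unfolding rf_def gram_rank_eq_dim_blocks span_X ..
  have solution_x: "gcca_stage_solution K (\<lambda>k. x k ` {..<p k}) W zs v =
                     gcca_stage_solution K blocks W zs v" for W zs v
    by (rule gcca_stage_solution_span_cong) (simp add: span_x)
  have choice_x: "gcca_z_i_choice (\<lambda>k. x k ` {..<p k}) r f eta l k y =
                  gcca_z_i_choice blocks r f eta l k y" if "k \<in> {1..K}" for l k y
    by (rule gcca_z_i_choice_span_cong) (simp add: span_x[OF that])
  show ?thesis
    unfolding rf solution_x span_X span_blocks_eq_span_w
  proof (intro conjI ballI allI impI)
    fix l zs
    assume l: "l \<in> {1..gram_rank}"
      and "\<forall>k\<in>{1..K}. gcca_z_i_choice (\<lambda>k. x k ` {..<p k}) r f eta l k (zs k)"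
    then have choice: "\<And>k. k \<in> {1..K} \<Longrightarrow> gcca_z_i_choice blocks r f eta l k (zs k)"
      using choice_x by blast
    show "gcca_stage_solution K blocks (insert 0 (w ` {1..<l})) zs (w l)"
      by (rule stage_solution_z_i_choice[OF l choice])
    show "corr (zs k) (w l) = sqrt (lam l) * blk_norm (r k) (eta l k) \<or>
          corr (zs k) (w l) = - (sqrt (lam l) * blk_norm (r k) (eta l k))" if "k \<in> {1..K}" for k
      by (rule corr_z_i_choice(3)[OF that l choice[OF that]])
    show "(\<Sum>k=1..K. (corr (zs k) (w l))\<^sup>2) = lam l"
      using gcca_obj_z_i_choice[OF l choice] by (simp add: gcca_obj_def)
  next
    fix l k assume l: "l \<in> {1..gram_rank}" and k: "k \<in> {1..K}"
    show "blk_zero (r k) (eta l k) = (\<forall>v\<in>span (x k ` {..<p k}). inner (w l) v = 0)"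
      using blk_zero_iff_orthogonal_block[OF k l] by (simp add: span_x[OF k])
    show "theta (z l k) (w l) \<in> {0..pi/2}"
      by (rule theta_z_w[OF k l])
  next
    fix k assume k: "k \<in> {1..K}"
    show "span ((\<lambda>l. z l k) ` {1..gram_rank}) = span (x k ` {..<p k})"
      unfolding span_x[OF k] by (rule span_z_eq_span_block[OF k])
  next
    fix zz l k
    assume zz: "(\<forall>m\<in>{1..gram_rank}. \<forall>k\<in>{1..K}. gcca_z_i_choice (\<lambda>k. x k ` {..<p k}) r f eta m k (zz m k))
                \<or> (\<forall>m\<in>{1..gram_rank}. \<forall>k\<in>{1..K}. zz m k = z m k)"
      and l: "l \<in> {1..gram_rank}" and k: "k \<in> {1..K}"
      and hyp: "lam l \<le> 1 \<and> span ((\<lambda>m. zz m k) ` {1..<l}) \<noteq> span (x k ` {..<p k})"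
    have zz_k: "gcca_z_i_choice blocks r f eta m k (zz m k) \<or> zz m k = z m k"
      if "m \<in> {1..<l}" for m
      using zz that l k by (auto simp: choice_x)
    have "span ((\<lambda>m. zz m k) ` {1..<l}) \<noteq> span (f k ` {..<r k})"
      using hyp span_x[OF k] by simp
    moreover have "span (\<Union>j\<in>{1..K} - {k}. x j ` {..<p j}) = span (\<Union>j\<in>{1..K} - {k}. f j ` {..<r j})"
      by (rule span_UN_cong) (simp add: span_x)
    ultimately show "\<exists>zs v. gcca_stage_solution K blocks (insert 0 (w ` {1..<l})) zs v \<and>
        v \<in> span (x k ` {..<p k}) \<and> (\<forall>u\<in>span (\<Union>j\<in>{1..K} - {k}. x j ` {..<p j}). inner v u = 0)"
      using stage_solution_orthogonal_to_other_blocks[OF l _ k zz_k] hyp span_x[OF k] by simp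
  qed simp
qed

end
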